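(* For all $x\in[0,\infty)$, $$0\le\lim_{k\to\infty}\left|\frac{x\,\mathcal{P}_{k+1}(x)}{\mathcal{P}_k(x)}\right|\le 2,$$ where $\mathcal{P}_k(x)={}_2F_1\!\left(\frac{k}{2},\frac{k+1}{2};\frac{2k+3}{2};-x^2\right)$.
   Context: ${}_2F_1(a,b;c;z)$ denotes the Gauss hypergeometric function. *)

theory Defs
  imports "HOL-Analysis.Analysis"
begin

text \<open>Inside the unit disc it is
the hypergeometric series; outside (we only need real z \<le> -1) it is the
principal-branch analytic continuation, given by Euler's integral representation
(valid for c > b > 0 and real z < 1).\<close>

definition hyp2F1_series :: "real \<Rightarrow> real \<Rightarrow> real \<Rightarrow> real \<Rightarrow> real" where
  "hyp2F1_series a b c z =
     (\<Sum>n. pochhammer a n * pochhammer b n / (pochhammer c n * fact n) * z ^ n)"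

definition hyp2F1_euler :: "real \<Rightarrow> real \<Rightarrow> real \<Rightarrow> real \<Rightarrow> real" where
  "hyp2F1_euler a b c z =
     Gamma c / (Gamma b * Gamma (c - b)) *
     integral {0..1} (\<lambda>t. t powr (b - 1) * (1 - t) powr (c - b - 1) * (1 - z * t) powr (- a))"

definition hyp2F1 :: "real \<Rightarrow> real \<Rightarrow> real \<Rightarrow> real \<Rightarrow> real" where
  "hyp2F1 a b c z = (if \<bar>z\<bar> < 1 then hyp2F1_series a b c z else hyp2F1_euler a b c z)"

definition calP :: "nat \<Rightarrow> real \<Rightarrow> real" where
  "calP k x = hyp2F1 (real k / 2) ((real k + 1) / 2) ((2 * real k + 3) / 2) (- (x ^ 2))"

end

theory Submission
  imports Defs
begin

(*
  For k >= 2 the parameters b = (k+1)/2 and c - b = (k+2)/2 both exceed 1, so integrating the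
  binomial series of (1 - z t) powr (-a) term by term against the Beta weight shows that Euler's
  integral also represents the hypergeometric series inside the unit disc. Hence
  P_k(x) = C_k I_k(x) for all real x, where C_k is a ratio of Gamma values and I_k(x) is the
  integral over [0,1] of t^((k-1)/2) (1-t)^(k/2) (1 + x^2 t)^(-k/2).

  Passing from k to k+1 multiplies this kernel by h(t) = sqrt (t (1-t) / (1 + x^2 t)), and
  x h <= 1 on [0,1]. So x I_(k+1) <= I_k, while Cauchy-Schwarz with respect to the kernel makes
  k -> I_k log-convex; thus x I_(k+1) / I_k is nondecreasing and converges to a limit in [0,1].
  Since C_(k+1) / C_k = 2 + 1/(k+1), the ratio x P_(k+1) / P_k tends to twice that limit.
*)

lemma pochhammer_binomial_sums:
  fixes a w :: real
  assumes "\<bar>w\<bar> < 1"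
  shows "(\<lambda>n. pochhammer a n / fact n * w ^ n) sums (1 - w) powr (- a)"
proof -
  have "(\<lambda>n. ((- a) gchoose n) * (- w) ^ n) sums (1 + - w) powr (- a)"
    by (rule gen_binomial_real) (use assms in simp)
  moreover have "((- a) gchoose n) * (- w) ^ n = pochhammer a n / fact n * w ^ n" for n
  proof -
    have "(-1::real) ^ n * (-1) ^ n = 1"
      by (simp flip: power_mult_distrib)
    then show ?thesis
      by (simp add: gbinomial_pochhammer power_minus[of w])
  qed
  ultimately show ?thesis by simp
qed

lemma has_integral_Beta_times_power:
  fixes b d :: real
  assumes "b > 0" "d > 0"
  shows "((\<lambda>t. t powr (b - 1) * (1 - t) powr (d - 1) * t ^ n) has_integral Beta (b + n) d) {0..1}"
proof -
  have "((\<lambda>t. t powr (b + n - 1) * (1 - t) powr (d - 1)) has_integral Beta (b + n) d) {0..1}"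
    by (rule has_integral_Beta_real) (use assms in auto)
  moreover have "t powr (b + n - 1) * (1 - t) powr (d - 1) = t powr (b - 1) * (1 - t) powr (d - 1) * t ^ n"
    if "t \<in> {0..1}" for t
    using that by (cases "t = 0") (auto simp: algebra_simps simp flip: powr_realpow powr_add)
  ultimately show ?thesis
    by (metis (no_types, lifting) has_integral_cong)
qed

lemma Gamma_Beta_eq_pochhammer_ratio:
  fixes b c :: real
  assumes "b > 0" "c > b"
  shows "Gamma c / (Gamma b * Gamma (c - b)) * Beta (b + n) (c - b) = pochhammer b n / pochhammer c n"
proof -
  have "b \<notin> \<int>\<^sub>\<le>\<^sub>0" "c \<notin> \<int>\<^sub>\<le>\<^sub>0"
    using assms by (auto elim!: nonpos_Ints_cases)
  moreover have "Gamma b > 0" "Gamma c > 0" "Gamma (c - b) > 0" "Gamma (c + n) > 0"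
    using assms by (auto intro!: Gamma_real_pos)
  ultimately show ?thesis
    by (simp add: Beta_def pochhammer_Gamma field_simps)
qed

lemma sums_integral_of_Weierstrass_bound:
  fixes f :: "nat \<Rightarrow> 'a::euclidean_space \<Rightarrow> real"
  assumes cont: "\<And>n. continuous_on (cbox a b) (f n)"
    and bound: "\<And>n t. t \<in> cbox a b \<Longrightarrow> \<bar>f n t\<bar> \<le> M n" and "summable M"
    and sums: "\<And>t. t \<in> cbox a b \<Longrightarrow> (\<lambda>n. f n t) sums g t"
    and int: "\<And>n. (f n has_integral i n) (cbox a b)"
  shows "i sums integral (cbox a b) g"
proof -
  have "uniform_limit (cbox a b) (\<lambda>N t. \<Sum>n<N. f n t) (\<lambda>t. \<Sum>n. f n t) sequentially"
    using bound \<open>summable M\<close> by (intro Weierstrass_m_test) auto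
  also have "?this \<longleftrightarrow> uniform_limit (cbox a b) (\<lambda>N t. \<Sum>n<N. f n t) g sequentially"
    using sums by (intro uniform_limit_cong') (auto simp: sums_iff)
  finally obtain I J where I: "\<And>N. ((\<lambda>t. \<Sum>n<N. f n t) has_integral I N) (cbox a b)"
    and J: "(g has_integral J) (cbox a b)" and IJ: "I \<longlonglongrightarrow> J"
    by (rule uniform_limit_integral_cbox) (auto intro: continuous_on_sum cont)
  have "I = (\<lambda>N. \<Sum>n<N. i n)"
  proof
    fix N
    show "I N = (\<Sum>n<N. i n)"
      by (rule has_integral_unique[OF I has_integral_sum]) (auto intro: int)
  qed
  with IJ J show ?thesis
    by (simp add: sums_def integral_unique)
qed

lemma hyp2F1_series_eq_euler:
  fixes a b c z :: real
  assumes a: "a \<ge> 0" and b: "b > 1" and cb: "c - b > 1" and z: "\<bar>z\<bar> < 1"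
  shows "hyp2F1_series a b c z = hyp2F1_euler a b c z"
proof -
  define K where "K = Gamma c / (Gamma b * Gamma (c - b))"
  define w where "w = (\<lambda>t::real. t powr (b - 1) * (1 - t) powr (c - b - 1))"
  define f where "f = (\<lambda>n t. w t * (pochhammer a n / fact n * (z * t) ^ n))"
  have poch_nonneg: "pochhammer a n \<ge> 0" for n
    using a by (simp add: pochhammer_prod prod_nonneg)
  have w_le_1: "\<bar>w t\<bar> \<le> 1" if "t \<in> cbox 0 1" for t
    using that b cb by (auto simp: w_def abs_mult intro!: mult_le_one powr_le1)
  have "(\<lambda>n. pochhammer a n / fact n * z ^ n * Beta (b + n) (c - b))
          sums integral (cbox 0 1) (\<lambda>t. w t * (1 - z * t) powr (- a))"
  proof (rule sums_integral_of_Weierstrass_bound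
      [where f = f and M = "\<lambda>n. pochhammer a n / fact n * \<bar>z\<bar> ^ n"])
    show "continuous_on (cbox 0 1) (f n)" for n
      unfolding f_def w_def using b cb
      by (intro continuous_intros continuous_on_powr') auto
    show "\<bar>f n t\<bar> \<le> pochhammer a n / fact n * \<bar>z\<bar> ^ n" if "t \<in> cbox 0 1" for n t
    proof -
      have "\<bar>f n t\<bar> = \<bar>w t\<bar> * \<bar>t\<bar> ^ n * (pochhammer a n / fact n * \<bar>z\<bar> ^ n)"
        using poch_nonneg by (simp add: f_def abs_mult power_mult_distrib power_abs)
      also have "\<dots> \<le> 1 * 1 * (pochhammer a n / fact n * \<bar>z\<bar> ^ n)"
        using that w_le_1 poch_nonneg
        by (intro mult_right_mono mult_mono) (auto simp: power_le_one)
      finally show ?thesis by simp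
    qed
    show "summable (\<lambda>n. pochhammer a n / fact n * \<bar>z\<bar> ^ n)"
      using pochhammer_binomial_sums[of "\<bar>z\<bar>" a] z by (simp add: sums_iff)
    show "(\<lambda>n. f n t) sums (w t * (1 - z * t) powr (- a))" if "t \<in> cbox 0 1" for t
    proof -
      have "\<bar>z * t\<bar> < 1"
        using that z by (auto simp: abs_mult intro: le_less_trans[OF mult_left_le])
      then show ?thesis
        unfolding f_def by (intro sums_mult pochhammer_binomial_sums)
    qed
    show "(f n has_integral pochhammer a n / fact n * z ^ n * Beta (b + n) (c - b)) (cbox 0 1)" for n
      using has_integral_mult_right[OF has_integral_Beta_times_power[of b "c - b" n],
          of "pochhammer a n / fact n * z ^ n"] b cb
      by (simp add: f_def w_def power_mult_distrib mult_ac)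
  qed
  then have "(\<lambda>n. K * (pochhammer a n / fact n * z ^ n * Beta (b + n) (c - b)))
               sums (K * integral (cbox 0 1) (\<lambda>t. w t * (1 - z * t) powr (- a)))"
    by (rule sums_mult)
  moreover have "K * (pochhammer a n / fact n * z ^ n * Beta (b + n) (c - b))
                   = pochhammer a n * pochhammer b n / (pochhammer c n * fact n) * z ^ n" for n
  proof -
    have "K * Beta (b + n) (c - b) = pochhammer b n / pochhammer c n"
      unfolding K_def by (rule Gamma_Beta_eq_pochhammer_ratio) (use b cb in auto)
    moreover have "pochhammer c n > 0"
      using b cb by (intro pochhammer_pos) auto
    ultimately show ?thesis
      by (simp add: field_simps)
  qed
  ultimately show ?thesis
    by (simp add: hyp2F1_series_def hyp2F1_euler_def sums_iff K_def w_def)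
qed

lemma has_integral_weighted_Cauchy_Schwarz:
  fixes w h :: "'a::euclidean_space \<Rightarrow> real"
  assumes I0: "(w has_integral I0) S"
    and I1: "((\<lambda>t. w t * h t) has_integral I1) S"
    and I2: "((\<lambda>t. w t * h t ^ 2) has_integral I2) S"
    and w_nonneg: "\<And>t. t \<in> S \<Longrightarrow> 0 \<le> w t"
  shows "I1\<^sup>2 \<le> I0 * I2"
proof -
  have quadratic_nonneg: "0 \<le> a\<^sup>2 * I0 - 2 * a * I1 + I2" for a
  proof (rule has_integral_nonneg)
    have "((\<lambda>t. a\<^sup>2 * w t - 2 * a * (w t * h t) + w t * h t ^ 2)
            has_integral a\<^sup>2 * I0 - 2 * a * I1 + I2) S"
      by (intro has_integral_add has_integral_diff has_integral_mult_right I0 I1 I2)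
    then show "((\<lambda>t. w t * (a - h t)\<^sup>2) has_integral a\<^sup>2 * I0 - 2 * a * I1 + I2) S"
      by (simp add: power2_diff algebra_simps)
    show "0 \<le> w t * (a - h t)\<^sup>2" if "t \<in> S" for t
      using w_nonneg[OF that] by simp
  qed
  have "0 \<le> I0"
    using I0 w_nonneg by (rule has_integral_nonneg)
  show ?thesis
  proof (cases "I0 = 0")
    case True
    have "I1 = 0"
    proof (rule ccontr)
      assume "I1 \<noteq> 0"
      then show False
        using quadratic_nonneg[of "(I2 + 1) / (2 * I1)"] True by (simp add: field_simps)
    qed
    with True show ?thesis by simp
  next
    case False
    with \<open>0 \<le> I0\<close> have "0 < I0" by simp
    with quadratic_nonneg[of "I1 / I0"] show ?thesis
      by (simp add: field_simps power2_eq_square)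
  qed
qed

definition calP_kernel :: "real \<Rightarrow> nat \<Rightarrow> real \<Rightarrow> real" where
  "calP_kernel x k t =
     t powr ((real k - 1) / 2) * (1 - t) powr (real k / 2) * (1 + x\<^sup>2 * t) powr (- (real k / 2))"

definition calP_integral :: "real \<Rightarrow> nat \<Rightarrow> real" where
  "calP_integral x k = integral {0..1} (calP_kernel x k)"

definition calP_Gamma_factor :: "nat \<Rightarrow> real" where
  "calP_Gamma_factor k =
     Gamma ((2 * real k + 3) / 2) / (Gamma ((real k + 1) / 2) * Gamma ((real k + 2) / 2))"

definition calP_kernel_step :: "real \<Rightarrow> real \<Rightarrow> real" where
  "calP_kernel_step x t = sqrt (t * (1 - t) / (1 + x\<^sup>2 * t))"

lemma calP_eq_Gamma_factor_times_integral:
  assumes "k \<ge> 2"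
  shows "calP k x = calP_Gamma_factor k * calP_integral x k"
proof -
  let ?a = "real k / 2" and ?b = "(real k + 1) / 2" and ?c = "(2 * real k + 3) / 2"
  have "calP k x = hyp2F1_euler ?a ?b ?c (- x\<^sup>2)"
  proof (cases "x\<^sup>2 < 1")
    case True
    then have "calP k x = hyp2F1_series ?a ?b ?c (- x\<^sup>2)"
      by (simp add: calP_def hyp2F1_def)
    also have "\<dots> = hyp2F1_euler ?a ?b ?c (- x\<^sup>2)"
      by (rule hyp2F1_series_eq_euler) (use assms True in \<open>auto simp: field_simps\<close>)
    finally show ?thesis .
  qed (simp add: calP_def hyp2F1_def)
  moreover have "?b - 1 = (real k - 1) / 2" "?c - ?b = (real k + 2) / 2"
    "(real k + 2) / 2 - 1 = real k / 2" "\<And>t. 1 - - x\<^sup>2 * t = 1 + x\<^sup>2 * t"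
    by (simp_all add: field_simps)
  ultimately show ?thesis
    by (simp only: hyp2F1_euler_def calP_Gamma_factor_def calP_integral_def calP_kernel_def[abs_def])
qed

lemma calP_kernel_Suc:
  assumes "t \<in> {0..1}"
  shows "calP_kernel x (Suc k) t = calP_kernel x k t * calP_kernel_step x t"
proof -
  have "0 < 1 + x\<^sup>2 * t"
    using assms by (simp add: add_pos_nonneg)
  then have half_powers: "t powr (1/2) = sqrt t" "(1 - t) powr (1/2) = sqrt (1 - t)"
    "(1 + x\<^sup>2 * t) powr - (1/2) = inverse (sqrt (1 + x\<^sup>2 * t))"
    using assms by (simp_all add: powr_half_sqrt powr_minus)
  have "(real (Suc k) - 1) / 2 = (real k - 1) / 2 + 1 / 2" "real (Suc k) / 2 = real k / 2 + 1 / 2"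
    "- (real (Suc k) / 2) = - (real k / 2) + - (1 / 2)"
    by (simp_all add: field_simps)
  then have "calP_kernel x (Suc k) t =
      calP_kernel x k t * (t powr (1/2) * (1 - t) powr (1/2) * (1 + x\<^sup>2 * t) powr - (1/2))"
    by (simp only: calP_kernel_def powr_add mult_ac)
  also have "t powr (1/2) * (1 - t) powr (1/2) * (1 + x\<^sup>2 * t) powr - (1/2) = calP_kernel_step x t"
    unfolding half_powers calP_kernel_step_def
    by (simp only: real_sqrt_divide real_sqrt_mult real_sqrt_inverse divide_inverse)
  finally show ?thesis .
qed

lemma mult_calP_kernel_step_le_1:
  assumes "x \<ge> 0" "t \<in> {0..1}"
  shows "x * calP_kernel_step x t \<le> 1"
proof -
  have "sqrt (x\<^sup>2) = x"
    using assms by simp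
  then have step_eq: "x * calP_kernel_step x t = sqrt (x\<^sup>2 * (t * (1 - t) / (1 + x\<^sup>2 * t)))"
    by (simp only: calP_kernel_step_def real_sqrt_mult)
  have "x\<^sup>2 * (t * (1 - t)) \<le> 1 + x\<^sup>2 * t"
    using assms by (simp add: algebra_simps)
  moreover have "0 < 1 + x\<^sup>2 * t"
    using assms by (simp add: add_pos_nonneg)
  ultimately have "x\<^sup>2 * (t * (1 - t) / (1 + x\<^sup>2 * t)) \<le> 1"
    by (simp add: divide_simps)
  then show ?thesis
    by (simp add: step_eq)
qed

lemma continuous_on_calP_kernel:
  assumes "k \<ge> 2"
  shows "continuous_on {0..1} (calP_kernel x k)"
proof -
  have pos: "0 < 1 + x\<^sup>2 * t" if "0 \<le> t" for t
    using that by (simp add: add_pos_nonneg)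
  have "continuous_on {0..1} (\<lambda>t::real. t powr ((real k - 1) / 2))"
    by (rule continuous_on_powr') (use assms in \<open>auto intro!: continuous_intros\<close>)
  moreover have "continuous_on {0..1} (\<lambda>t::real. (1 - t) powr (real k / 2))"
    by (rule continuous_on_powr') (use assms in \<open>auto intro!: continuous_intros\<close>)
  moreover have "continuous_on {0..1} (\<lambda>t. (1 + x\<^sup>2 * t) powr - (real k / 2))"
    by (intro continuous_on_powr')
       (auto intro!: continuous_intros simp: pos[THEN dual_order.strict_implies_not_eq])
  ultimately show ?thesis
    unfolding calP_kernel_def by (intro continuous_on_mult)
qed

lemma calP_kernel_has_integral:
  "k \<ge> 2 \<Longrightarrow> (calP_kernel x k has_integral calP_integral x k) {0..1}"
  unfolding calP_integral_def
  by (intro integrable_integral integrable_continuous_interval continuous_on_calP_kernel)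

lemma calP_integral_pos:
  assumes "k \<ge> 2"
  shows "calP_integral x k > 0"
proof -
  have "0 \<le> calP_integral x k"
    using calP_kernel_has_integral[OF assms] by (rule has_integral_nonneg) (simp add: calP_kernel_def)
  moreover have "calP_kernel x k (1/2) > 0"
    using add_pos_nonneg[of 1 "x\<^sup>2 / 2"] by (simp add: calP_kernel_def)
  moreover have "calP_kernel x k (1/2) = 0" if "calP_integral x k = 0"
  proof (rule has_integral_0_cbox_imp_0[of 0 1 "calP_kernel x k"])
    show "continuous_on (cbox 0 1) (calP_kernel x k)"
      using continuous_on_calP_kernel[OF assms] by simp
    show "(calP_kernel x k has_integral 0) (cbox 0 1)"
      using calP_kernel_has_integral[OF assms, of x] that by simp
  qed (auto simp: calP_kernel_def)
  ultimately show ?thesis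
    by force
qed

lemma calP_integral_log_convex:
  assumes "k \<ge> 2"
  shows "(calP_integral x (Suc k))\<^sup>2 \<le> calP_integral x k * calP_integral x (Suc (Suc k))"
proof (rule has_integral_weighted_Cauchy_Schwarz)
  show "(calP_kernel x k has_integral calP_integral x k) {0..1}"
    using assms by (rule calP_kernel_has_integral)
  have "((\<lambda>t. calP_kernel x k t * calP_kernel_step x t) has_integral calP_integral x (Suc k)) {0..1}
    \<longleftrightarrow> (calP_kernel x (Suc k) has_integral calP_integral x (Suc k)) {0..1}"
    by (intro has_integral_cong) (simp add: calP_kernel_Suc)
  then show "((\<lambda>t. calP_kernel x k t * calP_kernel_step x t) has_integral calP_integral x (Suc k)) {0..1}"
    using assms by (simp add: calP_kernel_has_integral)
  have "((\<lambda>t. calP_kernel x k t * (calP_kernel_step x t)\<^sup>2)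
          has_integral calP_integral x (Suc (Suc k))) {0..1}
    \<longleftrightarrow> (calP_kernel x (Suc (Suc k)) has_integral calP_integral x (Suc (Suc k))) {0..1}"
    by (intro has_integral_cong) (simp add: calP_kernel_Suc power2_eq_square mult.assoc)
  then show "((\<lambda>t. calP_kernel x k t * (calP_kernel_step x t)\<^sup>2)
               has_integral calP_integral x (Suc (Suc k))) {0..1}"
    using assms by (simp add: calP_kernel_has_integral)
qed (simp add: calP_kernel_def)

lemma mult_calP_integral_Suc_le:
  assumes "x \<ge> 0" "k \<ge> 2"
  shows "x * calP_integral x (Suc k) \<le> calP_integral x k"
proof (rule has_integral_le)
  show "((\<lambda>t. x * calP_kernel x (Suc k) t) has_integral x * calP_integral x (Suc k)) {0..1}"
    using assms by (intro has_integral_mult_right calP_kernel_has_integral) auto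
  show "(calP_kernel x k has_integral calP_integral x k) {0..1}"
    using assms by (intro calP_kernel_has_integral)
  show "x * calP_kernel x (Suc k) t \<le> calP_kernel x k t" if "t \<in> {0..1}" for t
  proof -
    have "x * calP_kernel x (Suc k) t = calP_kernel x k t * (x * calP_kernel_step x t)"
      using that by (simp add: calP_kernel_Suc)
    also have "\<dots> \<le> calP_kernel x k t"
      using mult_calP_kernel_step_le_1[OF assms(1) that]
      by (intro mult_left_le) (simp_all add: calP_kernel_def)
    finally show ?thesis .
  qed
qed

lemma calP_integral_ratio_converges:
  assumes "x \<ge> 0"
  shows "\<exists>L. (\<lambda>k. x * calP_integral x (Suc k) / calP_integral x k) \<longlonglongrightarrow> L
               \<and> 0 \<le> L \<and> L \<le> 1"
proof -
  define r where "r k = x * calP_integral x (Suc k) / calP_integral x k" for k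
  have r_nonneg: "0 \<le> r k" if "k \<ge> 2" for k
    using that assms calP_integral_pos[of k x] calP_integral_pos[of "Suc k" x] by (simp add: r_def)
  have r_le_1: "r k \<le> 1" if "k \<ge> 2" for k
    using that assms calP_integral_pos[of k x] mult_calP_integral_Suc_le[of x k] by (simp add: r_def)
  have r_mono: "r k \<le> r (Suc k)" if "k \<ge> 2" for k
  proof -
    have "0 < calP_integral x k" "0 < calP_integral x (Suc k)"
      using that calP_integral_pos by auto
    with calP_integral_log_convex[OF that, of x]
    have "calP_integral x (Suc k) / calP_integral x k \<le> calP_integral x (Suc (Suc k)) / calP_integral x (Suc k)"
      by (simp add: divide_simps power2_eq_square mult.commute)
    then have "x * (calP_integral x (Suc k) / calP_integral x k)
             \<le> x * (calP_integral x (Suc (Suc k)) / calP_integral x (Suc k))"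
      using assms by (rule mult_left_mono)
    then show ?thesis
      by (simp add: r_def)
  qed
  have "incseq (\<lambda>n. r (n + 2))"
    using r_mono by (intro incseq_SucI) simp
  then obtain L where L: "(\<lambda>n. r (n + 2)) \<longlonglongrightarrow> L" and r_le_L: "\<And>n. r (n + 2) \<le> L"
    using incseq_convergent[of "\<lambda>n. r (n + 2)" 1] r_le_1 by auto
  have "0 \<le> L"
    using r_nonneg[of 2] r_le_L[of 0] by (simp add: numeral_2_eq_2)
  moreover have "L \<le> 1"
    using r_le_1 by (intro LIMSEQ_le_const2[OF L]) auto
  moreover have "r \<longlonglongrightarrow> L"
    using L by (rule LIMSEQ_offset)
  ultimately show ?thesis
    unfolding r_def by blast
qed

lemma calP_Gamma_factor_Suc:
  "calP_Gamma_factor (Suc k) = (2 + inverse (real (Suc k))) * calP_Gamma_factor k"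
proof -
  define a where "a = (2 * real k + 3) / 2"
  define b where "b = (real k + 1) / 2"
  define d where "d = (real k + 2) / 2"
  have "a > 0" "b > 0"
    by (simp_all add: a_def b_def)
  then have Gamma_Suc: "Gamma (a + 1) = a * Gamma a" "Gamma (b + 1) = b * Gamma b"
    by (auto intro!: Gamma_plus1 elim!: nonpos_Ints_cases)
  have "calP_Gamma_factor (Suc k) = Gamma (a + 1) / (Gamma d * Gamma (b + 1))"
    by (simp add: calP_Gamma_factor_def a_def b_def d_def field_simps)
  also have "\<dots> = a / b * (Gamma a / (Gamma b * Gamma d))"
    by (simp add: Gamma_Suc mult_ac)
  also have "Gamma a / (Gamma b * Gamma d) = calP_Gamma_factor k"
    by (simp add: calP_Gamma_factor_def a_def b_def d_def)
  also have "a / b = 2 + inverse (real (Suc k))"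
    by (simp add: a_def b_def field_simps)
  finally show ?thesis .
qed

lemma abs_calP_ratio_eq:
  assumes "x \<ge> 0" "k \<ge> 2"
  shows "\<bar>x * calP (Suc k) x / calP k x\<bar>
           = (2 + inverse (real (Suc k))) * (x * calP_integral x (Suc k) / calP_integral x k)"
proof -
  have "calP_Gamma_factor k > 0"
    unfolding calP_Gamma_factor_def by (intro divide_pos_pos mult_pos_pos Gamma_real_pos) auto
  then have ratio_eq: "x * calP (Suc k) x / calP k x
               = (2 + inverse (real (Suc k))) * (x * calP_integral x (Suc k) / calP_integral x k)"
    using assms by (simp add: calP_eq_Gamma_factor_times_integral calP_Gamma_factor_Suc)
  have "0 \<le> x * calP_integral x (Suc k) / calP_integral x k"
    using assms calP_integral_pos[of k x] calP_integral_pos[of "Suc k" x] by simp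
  then have "0 \<le> (2 + inverse (real (Suc k))) * (x * calP_integral x (Suc k) / calP_integral x k)"
    by (intro mult_nonneg_nonneg) auto
  then show ?thesis
    by (simp only: ratio_eq abs_of_nonneg)
qed

theorem lemma3:
  fixes x :: real
  assumes "x \<ge> 0"
  shows "\<exists>L. (\<lambda>k. \<bar>x * calP (Suc k) x / calP k x\<bar>) \<longlonglongrightarrow> L \<and> 0 \<le> L \<and> L \<le> 2"
proof -
  obtain L where L: "(\<lambda>k. x * calP_integral x (Suc k) / calP_integral x k) \<longlonglongrightarrow> L"
    "0 \<le> L" "L \<le> 1"
    using calP_integral_ratio_converges[OF assms] by blast
  have "(\<lambda>k. (2 + inverse (real (Suc k))) * (x * calP_integral x (Suc k) / calP_integral x k))
          \<longlonglongrightarrow> (2 + 0) * L"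
    by (intro tendsto_intros LIMSEQ_inverse_real_of_nat L)
  moreover have "\<forall>\<^sub>F k in sequentially.
      (2 + inverse (real (Suc k))) * (x * calP_integral x (Suc k) / calP_integral x k)
        = \<bar>x * calP (Suc k) x / calP k x\<bar>"
    by (intro eventually_sequentiallyI[of 2] abs_calP_ratio_eq[symmetric] assms)
  ultimately show ?thesis
    using L by (intro exI[of _ "2 * L"]) (auto dest: Lim_transform_eventually)
qed

end
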